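(* Let $n\ge1$, $0\le k\le n$, and let $H$ be an operator on $(\mathbb{C}^2)^{\otimes n}$ that can be written as a sum of $k$-local terms. Then $$\mathrm{Tr}(HB_k)=2^{k-n}\,\mathrm{Tr}(HC_k),$$ and $\mathrm{Tr}(HB_r)=0$ for all $r$ with $k<r\le n$.
   Context: Qubits $1,\dots,n$, $Z_j$ the Pauli $Z$ on qubit $j$. An operator is $k$-local if it acts non-trivially on at most $k$ qubits. For $m=0,\dots,n$, $\Pi_m$ is the projector onto the span of computational basis states with exactly $m$ qubits in state $|1\rangle$. Define $C_0=I$ and for $l\ge1$, $C_l=\sum_{i_1<\cdots<i_l}Z_{i_1}\cdots Z_{i_l}$. For $0\le k\le n$ define $B_k=\sum_{m=0}^k(-1)^m\binom{n-m}{k-m}\Pi_m$. *)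

theory Defs
  imports Complex_Main
begin

text \<open>Computational basis states of qubits 0..n-1 are
  identified with the set S \<subseteq> {..<n} of qubits in state |1>. An operator is its
  matrix M S T = <S|M|T>; only entries with S, T \<subseteq> {..<n} are relevant.\<close>

type_synonym qop = "nat set \<Rightarrow> nat set \<Rightarrow> complex"

definition basis :: "nat \<Rightarrow> nat set set" where
  "basis n = Pow {..<n}"

definition mmult :: "nat \<Rightarrow> qop \<Rightarrow> qop \<Rightarrow> qop" where
  "mmult n A B = (\<lambda>S T. \<Sum>U\<in>basis n. A S U * B U T)"

definition qtrace :: "nat \<Rightarrow> qop \<Rightarrow> complex" where
  "qtrace n A = (\<Sum>S\<in>basis n. A S S)"

definition idop :: qop where
  "idop = (\<lambda>S T. if S = T then 1 else 0)"

definition pauliZ :: "nat \<Rightarrow> qop" where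
  "pauliZ j = (\<lambda>S T. if S = T then (if j \<in> S then -1 else 1) else 0)"

definition Zprod :: "nat set \<Rightarrow> qop" where
  "Zprod I = (\<lambda>S T. if S = T then (\<Prod>j\<in>I. if j \<in> S then -1 else 1) else 0)"

definition Cop :: "nat \<Rightarrow> nat \<Rightarrow> qop" where
  "Cop n l = (if l = 0 then idop
     else (\<lambda>S T. \<Sum>I\<in>{I. I \<subseteq> {..<n} \<and> card I = l}. Zprod I S T))"

definition Proj :: "nat \<Rightarrow> qop" where
  "Proj m = (\<lambda>S T. if S = T \<and> card S = m then 1 else 0)"

definition Bop :: "nat \<Rightarrow> nat \<Rightarrow> qop" where
  "Bop n k = (\<lambda>S T. \<Sum>m=0..k. (-1)^m * of_nat ((n - m) choose (k - m)) * Proj m S T)"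

text \<open>A acts non-trivially on at most k qubits: A = B_Q \<otimes> I on a set Q of at most k qubits.\<close>
definition klocal :: "nat \<Rightarrow> nat \<Rightarrow> qop \<Rightarrow> bool" where
  "klocal n k A \<longleftrightarrow> (\<exists>Q B. Q \<subseteq> {..<n} \<and> card Q \<le> k \<and>
     (\<forall>S\<in>basis n. \<forall>T\<in>basis n.
        A S T = (if S - Q = T - Q then B (S \<inter> Q) (T \<inter> Q) else 0)))"

definition sum_of_klocal :: "nat \<Rightarrow> nat \<Rightarrow> qop \<Rightarrow> bool" where
  "sum_of_klocal n k H \<longleftrightarrow> (\<exists>(m::nat) Ms. (\<forall>i<m. klocal n k (Ms i)) \<and>
     (\<forall>S\<in>basis n. \<forall>T\<in>basis n. H S T = (\<Sum>i<m. Ms i S T)))"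

end

theory Submission imports Defs begin

text \<open>Both B_r and C_r are diagonal, so only the diagonal of H enters the traces, and for a
  term acting on a set Q of at most k qubits that diagonal depends only on the bits in Q.
  Write B_r and C_r as sums over r-sets J of Z_J tensored with |0><0|, resp. I, on the qubits
  outside J. The trace of a local term against such a summand factorises into a trace over Q
  times one factor per qubit outside Q, and a qubit of J outside Q contributes Tr Z = 0. As
  |J| = r \<ge> |Q|, only J = Q survives, and only when r = |Q|; the other n - r qubits then
  contribute Tr |0><0| = 1 for B and Tr I = 2 for C, which gives the factor 2^(n-k).\<close>

lemma sum_Pow_Un_prod_factor:
  fixes a :: "'a set \<Rightarrow> 'b::comm_semiring_1" and \<phi> :: "'a \<Rightarrow> bool \<Rightarrow> 'b"
  assumes "finite Q" "finite X" "Q \<inter> X = {}"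
  shows "(\<Sum>S\<in>Pow (Q \<union> X). a (S \<inter> Q) * (\<Prod>i\<in>Q \<union> X. \<phi> i (i \<in> S)))
       = (\<Sum>R\<in>Pow Q. a R * (\<Prod>i\<in>Q. \<phi> i (i \<in> R))) * (\<Prod>i\<in>X. \<phi> i True + \<phi> i False)"
  using assms(2,3)
proof (induction X rule: finite_induct)
  case (insert x X)
  let ?U = "Q \<union> X"
  let ?f = "\<lambda>S. a (S \<inter> Q) * (\<Prod>i\<in>insert x ?U. \<phi> i (i \<in> S))"
  let ?g = "\<lambda>S. a (S \<inter> Q) * (\<Prod>i\<in>?U. \<phi> i (i \<in> S))"
  have x: "x \<notin> ?U" and fin: "finite ?U" using insert assms(1) by auto
  have "(\<Sum>S\<in>Pow (insert x ?U). ?f S) = (\<Sum>S\<in>Pow ?U. ?f S) + (\<Sum>S\<in>insert x ` Pow ?U. ?f S)"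
    unfolding Pow_insert by (rule sum.union_disjoint) (use x fin in auto)
  also have "(\<Sum>S\<in>insert x ` Pow ?U. ?f S) = (\<Sum>S\<in>Pow ?U. ?f (insert x S))"
    using x by (subst sum.reindex) (auto simp: inj_on_def)
  also have "(\<Sum>S\<in>Pow ?U. ?f S) = (\<Sum>S\<in>Pow ?U. \<phi> x False * ?g S)"
  proof (rule sum.cong)
    fix S assume "S \<in> Pow ?U"
    then have "x \<notin> S" using x by blast
    then show "?f S = \<phi> x False * ?g S" using x fin by (simp add: mult_ac)
  qed simp
  also have "(\<Sum>S\<in>Pow ?U. ?f (insert x S)) = (\<Sum>S\<in>Pow ?U. \<phi> x True * ?g S)"
  proof (rule sum.cong)
    fix S assume "S \<in> Pow ?U"
    then have "insert x S \<inter> Q = S \<inter> Q" using x by blast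
    moreover have "(\<Prod>i\<in>?U. \<phi> i (i \<in> insert x S)) = (\<Prod>i\<in>?U. \<phi> i (i \<in> S))"
      using x by (intro prod.cong refl arg_cong[where f="\<phi> _"]) auto
    ultimately show "?f (insert x S) = \<phi> x True * ?g S" using x fin by (simp add: mult_ac)
  qed simp
  finally show ?case
    using insert x by (simp add: sum_distrib_left[symmetric] algebra_simps)
qed (auto intro!: sum.cong simp: Int_absorb2)

lemma prod_sign_eq_power:
  "finite A \<Longrightarrow> (\<Prod>i\<in>A. if i \<in> S then -1 else 1) = (-1::'a::comm_ring_1) ^ card (A \<inter> S)"
  by (simp add: prod.inter_restrict[symmetric])

lemma sum_local_Zstring_padded:
  fixes a :: "nat set \<Rightarrow> complex" and \<psi> :: "bool \<Rightarrow> complex"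
  assumes Q: "Q \<subseteq> {..<n}" and J: "J \<subseteq> {..<n}" and card: "card Q \<le> card J"
  shows "(\<Sum>S\<in>Pow {..<n}. a (S \<inter> Q) *
            (\<Prod>i<n. if i \<in> J then (if i \<in> S then -1 else 1) else \<psi> (i \<in> S)))
       = (if J = Q then (\<psi> True + \<psi> False) ^ (n - card Q) * (\<Sum>R\<in>Pow Q. a R * (-1) ^ card R)
          else 0)"
proof -
  let ?X = "{..<n} - Q"
  define \<phi> where "\<phi> i b = (if i \<in> J then (if b then -1 else 1) else \<psi> b)" for i b
  have finQ: "finite Q" using Q finite_subset by blast
  have "{..<n} = Q \<union> ?X" using Q by blast
  then have "(\<Sum>S\<in>Pow {..<n}. a (S \<inter> Q) * (\<Prod>i<n. \<phi> i (i \<in> S)))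
      = (\<Sum>R\<in>Pow Q. a R * (\<Prod>i\<in>Q. \<phi> i (i \<in> R))) * (\<Prod>i\<in>?X. \<phi> i True + \<phi> i False)"
    using sum_Pow_Un_prod_factor[OF finQ, of ?X a \<phi>] by (simp add: lessThan_def)
  also have "\<dots> = (if J = Q then (\<psi> True + \<psi> False) ^ (n - card Q) * (\<Sum>R\<in>Pow Q. a R * (-1) ^ card R)
          else 0)"
  proof (cases "J = Q")
    case True
    have "(\<Prod>i\<in>Q. \<phi> i (i \<in> R)) = (-1) ^ card R" if "R \<subseteq> Q" for R
      using that finQ True by (simp add: \<phi>_def prod_sign_eq_power Int_absorb1)
    moreover have "(\<Prod>i\<in>?X. \<phi> i True + \<phi> i False) = (\<psi> True + \<psi> False) ^ (n - card Q)"
      using True card_Diff_subset[OF finQ Q] by (simp add: \<phi>_def)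
    ultimately show ?thesis using True by (simp add: mult.commute)
  next
    case False
    have "\<not> J \<subseteq> Q" using False card_seteq[OF finQ _ card] by blast
    then obtain j where "j \<in> J" "j \<in> ?X" using J by blast
    then have "(\<Prod>i\<in>?X. \<phi> i True + \<phi> i False) = 0" by (intro prod_zero) (auto simp: \<phi>_def)
    then show ?thesis using False by simp
  qed
  finally show ?thesis by (simp add: \<phi>_def)
qed

text \<open>The diagonal entry at S of the sum, over all sets J of r qubits, of Z_J tensored with
  diag(\<psi> False, \<psi> True) on each qubit outside J. The padding |0><0| gives B_r, the padding I
  gives C_r.\<close>

definition padded_Zsum :: "nat \<Rightarrow> nat \<Rightarrow> (bool \<Rightarrow> complex) \<Rightarrow> nat set \<Rightarrow> complex" where
  "padded_Zsum n r \<psi> S = (\<Sum>J | J \<subseteq> {..<n} \<and> card J = r.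
     \<Prod>i<n. if i \<in> J then (if i \<in> S then -1 else 1) else \<psi> (i \<in> S))"

lemma finite_subsets_of_card: "finite {J. J \<subseteq> {..<n::nat} \<and> card J = r}"
  by (rule finite_subset[of _ "Pow {..<n}"]) auto

lemma sum_local_padded_Zsum:
  fixes a :: "nat set \<Rightarrow> complex"
  assumes Q: "Q \<subseteq> {..<n}" and card: "card Q \<le> r"
  shows "(\<Sum>S\<in>Pow {..<n}. a (S \<inter> Q) * padded_Zsum n r \<psi> S)
       = (if r = card Q then (\<psi> True + \<psi> False) ^ (n - r) * (\<Sum>R\<in>Pow Q. a R * (-1) ^ card R)
          else 0)"
proof -
  let ?J = "{J. J \<subseteq> {..<n} \<and> card J = r}"
  have "(\<Sum>S\<in>Pow {..<n}. a (S \<inter> Q) * padded_Zsum n r \<psi> S)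
      = (\<Sum>J\<in>?J. \<Sum>S\<in>Pow {..<n}. a (S \<inter> Q) *
           (\<Prod>i<n. if i \<in> J then (if i \<in> S then -1 else 1) else \<psi> (i \<in> S)))"
    unfolding padded_Zsum_def sum_distrib_left by (rule sum.swap)
  also have "\<dots> = (\<Sum>J\<in>?J. if J = Q
      then (\<psi> True + \<psi> False) ^ (n - card Q) * (\<Sum>R\<in>Pow Q. a R * (-1) ^ card R) else 0)"
    using card by (intro sum.cong refl sum_local_Zstring_padded[OF Q]) auto
  also have "\<dots> = (if r = card Q
      then (\<psi> True + \<psi> False) ^ (n - r) * (\<Sum>R\<in>Pow Q. a R * (-1) ^ card R) else 0)"
    using Q by (simp add: sum.delta' finite_subsets_of_card)
  finally show ?thesis .
qed

lemma card_supersets_of_card: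
  assumes U: "finite U" and S: "S \<subseteq> U"
  shows "card {J. S \<subseteq> J \<and> J \<subseteq> U \<and> card J = r}
       = (if card S \<le> r then (card U - card S) choose (r - card S) else 0)"
proof (cases "card S \<le> r")
  case True
  have finS: "finite S" using U S finite_subset by blast
  have "bij_betw (\<lambda>K. S \<union> K) {K. K \<subseteq> U - S \<and> card K = r - card S}
          {J. S \<subseteq> J \<and> J \<subseteq> U \<and> card J = r}"
  proof (rule bij_betw_byWitness[where f' = "\<lambda>J. J - S"])
    show "(\<lambda>K. S \<union> K) ` {K. K \<subseteq> U - S \<and> card K = r - card S}
        \<subseteq> {J. S \<subseteq> J \<and> J \<subseteq> U \<and> card J = r}"
    proof clarify
      fix K assume "K \<subseteq> U - S" "card K = r - card S"
      moreover have "card (S \<union> K) = card S + card K"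
        using \<open>K \<subseteq> U - S\<close> U finS by (intro card_Un_disjoint) (auto intro: finite_subset)
      ultimately show "S \<subseteq> S \<union> K \<and> S \<union> K \<subseteq> U \<and> card (S \<union> K) = r"
        using S True by auto
    qed
    show "(\<lambda>J. J - S) ` {J. S \<subseteq> J \<and> J \<subseteq> U \<and> card J = r}
        \<subseteq> {K. K \<subseteq> U - S \<and> card K = r - card S}"
      using finS by (auto simp: card_Diff_subset)
  qed auto
  then have "card {J. S \<subseteq> J \<and> J \<subseteq> U \<and> card J = r}
      = card {K. K \<subseteq> U - S \<and> card K = r - card S}"
    by (simp add: bij_betw_same_card)
  also have "\<dots> = (card U - card S) choose (r - card S)"
    using U S by (simp add: n_subsets card_Diff_subset finS)
  finally show ?thesis using True by simp
next
  case False
  have "card S \<le> card J" if "S \<subseteq> J" "J \<subseteq> U" for J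
    using that U by (meson card_mono finite_subset)
  then have empty: "{J. S \<subseteq> J \<and> J \<subseteq> U \<and> card J = r} = {}" using False by fastforce
  show ?thesis unfolding empty using False by simp
qed

lemma Bop_diag_eq_padded_Zsum:
  assumes S: "S \<subseteq> {..<n}"
  shows "Bop n r S S = padded_Zsum n r (\<lambda>b. if b then 0 else 1) S"
proof -
  let ?J = "{J. J \<subseteq> {..<n} \<and> card J = r}"
  let ?c = "of_nat ((n - card S) choose (r - card S)) * (-1) ^ card S :: complex"
  have Zstring: "(\<Prod>i<n. if i \<in> J then (if i \<in> S then -1 else 1) else (if i \<in> S then 0 else 1))
      = (if S \<subseteq> J then (-1) ^ card S else (0::complex))" for J
  proof (cases "S \<subseteq> J")
    case True
    then have "(\<Prod>i<n. if i \<in> J then (if i \<in> S then -1 else 1) else (if i \<in> S then 0 else 1))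
        = (\<Prod>i<n. if i \<in> S then -1 else (1::complex))"
      by (intro prod.cong) auto
    then show ?thesis using True S by (simp add: prod_sign_eq_power Int_absorb1)
  next
    case False
    then obtain i where "i \<in> S" "i \<notin> J" by blast
    then have "(\<Prod>i<n. if i \<in> J then (if i \<in> S then -1 else 1) else (if i \<in> S then 0 else 1))
        = (0::complex)"
      using S by (intro prod_zero) auto
    then show ?thesis using False by simp
  qed
  have "padded_Zsum n r (\<lambda>b. if b then 0 else 1) S = (\<Sum>J\<in>?J. if S \<subseteq> J then (-1) ^ card S else 0)"
    unfolding padded_Zsum_def by (intro sum.cong refl) (simp add: Zstring)
  also have "\<dots> = (\<Sum>J\<in>{J\<in>?J. S \<subseteq> J}. (-1) ^ card S)"
    by (rule sum.inter_filter[OF finite_subsets_of_card, symmetric])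
  also have "{J\<in>?J. S \<subseteq> J} = {J. S \<subseteq> J \<and> J \<subseteq> {..<n} \<and> card J = r}"
    by blast
  also have "(\<Sum>J\<in>\<dots>. (-1) ^ card S) = (if card S \<le> r then ?c else 0)"
    using card_supersets_of_card[OF finite_lessThan S, of r] by simp
  also have "\<dots> = (\<Sum>m=0..r. if m = card S then ?c else 0)"
    by (simp add: sum.delta)
  also have "\<dots> = Bop n r S S"
    unfolding Bop_def Proj_def by (intro sum.cong) auto
  finally show ?thesis ..
qed

lemma Cop_diag_eq_padded_Zsum: "Cop n k S S = padded_Zsum n k (\<lambda>_. 1) S"
proof (cases "k = 0")
  case True
  have "{J. J \<subseteq> {..<n} \<and> card J = 0} = {{}}"
    by (auto simp: card_eq_0_iff dest: finite_subset[OF _ finite_lessThan])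
  then show ?thesis using True by (simp add: Cop_def idop_def padded_Zsum_def)
next
  case False
  have "Zprod J S S = (\<Prod>i<n. if i \<in> J then (if i \<in> S then -1 else 1) else 1)" if "J \<subseteq> {..<n}" for J
    using that by (simp add: Zprod_def prod.inter_restrict[OF finite_lessThan, symmetric] Int_absorb1)
  then show ?thesis using False by (simp add: Cop_def padded_Zsum_def)
qed

lemma qtrace_mmult_diagonal:
  assumes "\<And>S T. S \<noteq> T \<Longrightarrow> D S T = 0"
  shows "qtrace n (mmult n A D) = (\<Sum>S\<in>basis n. A S S * D S S)"
proof -
  have "mmult n A D S S = A S S * D S S" if "S \<in> basis n" for S
  proof -
    have "mmult n A D S S = (\<Sum>U\<in>basis n. if U = S then A S S * D S S else 0)"
      unfolding mmult_def by (intro sum.cong) (auto simp: assms)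
    then show ?thesis using that by (simp add: basis_def)
  qed
  then show ?thesis by (simp add: qtrace_def)
qed

lemma qtrace_mmult_Bop:
  "qtrace n (mmult n A (Bop n r)) = (\<Sum>S\<in>Pow {..<n}. A S S * padded_Zsum n r (\<lambda>b. if b then 0 else 1) S)"
proof -
  have "qtrace n (mmult n A (Bop n r)) = (\<Sum>S\<in>basis n. A S S * Bop n r S S)"
    by (rule qtrace_mmult_diagonal) (simp add: Bop_def Proj_def)
  also have "\<dots> = (\<Sum>S\<in>Pow {..<n}. A S S * padded_Zsum n r (\<lambda>b. if b then 0 else 1) S)"
    unfolding basis_def by (intro sum.cong refl) (auto simp: Bop_diag_eq_padded_Zsum)
  finally show ?thesis .
qed

lemma qtrace_mmult_Cop:
  "qtrace n (mmult n A (Cop n k)) = (\<Sum>S\<in>Pow {..<n}. A S S * padded_Zsum n k (\<lambda>_. 1) S)"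
proof -
  have "qtrace n (mmult n A (Cop n k)) = (\<Sum>S\<in>basis n. A S S * Cop n k S S)"
    by (rule qtrace_mmult_diagonal) (simp add: Cop_def idop_def Zprod_def)
  then show ?thesis by (simp add: basis_def Cop_diag_eq_padded_Zsum)
qed

lemma qtrace_mmult_sum_left:
  assumes "\<forall>S\<in>basis n. \<forall>T\<in>basis n. H S T = (\<Sum>i<m. Ms i S T)"
  shows "qtrace n (mmult n H D) = (\<Sum>i<m. qtrace n (mmult n (Ms i) D))"
proof -
  have "qtrace n (mmult n H D) = (\<Sum>S\<in>basis n. \<Sum>U\<in>basis n. \<Sum>i<m. Ms i S U * D U S)"
    unfolding qtrace_def mmult_def using assms by (simp add: sum_distrib_right)
  also have "\<dots> = (\<Sum>i<m. qtrace n (mmult n (Ms i) D))"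
    unfolding qtrace_def mmult_def by (simp add: sum.swap[where A="{..<m}"])
  finally show ?thesis .
qed

lemma klocal_diagonal:
  assumes "klocal n k A"
  obtains Q a where "Q \<subseteq> {..<n}" "card Q \<le> k" "\<And>S. S \<subseteq> {..<n} \<Longrightarrow> A S S = a (S \<inter> Q)"
proof -
  obtain Q B where "Q \<subseteq> {..<n}" "card Q \<le> k"
    and "\<forall>S\<in>basis n. \<forall>T\<in>basis n. A S T = (if S - Q = T - Q then B (S \<inter> Q) (T \<inter> Q) else 0)"
    using assms unfolding klocal_def by blast
  then show ?thesis by (intro that[of Q "\<lambda>R. B R R"]) (auto simp: basis_def)
qed

lemma sum_klocal_padded_Zsum:
  assumes "klocal n k A" "k \<le> r"
  obtains c where "\<And>\<psi>. (\<Sum>S\<in>Pow {..<n}. A S S * padded_Zsum n r \<psi> S)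
    = (if r = k then (\<psi> True + \<psi> False) ^ (n - r) * c else 0)"
proof -
  obtain Q a where Q: "Q \<subseteq> {..<n}" "card Q \<le> k"
    and A: "\<And>S. S \<subseteq> {..<n} \<Longrightarrow> A S S = a (S \<inter> Q)"
    using klocal_diagonal[OF assms(1)] by blast
  have "(\<Sum>S\<in>Pow {..<n}. A S S * padded_Zsum n r \<psi> S)
      = (if r = k then (\<psi> True + \<psi> False) ^ (n - r) *
           (if k = card Q then \<Sum>R\<in>Pow Q. a R * (-1) ^ card R else 0) else 0)" for \<psi>
  proof -
    have "(\<Sum>S\<in>Pow {..<n}. A S S * padded_Zsum n r \<psi> S)
        = (\<Sum>S\<in>Pow {..<n}. a (S \<inter> Q) * padded_Zsum n r \<psi> S)"
      by (intro sum.cong) (auto simp: A)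
    also have "\<dots> = (if r = card Q
        then (\<psi> True + \<psi> False) ^ (n - r) * (\<Sum>R\<in>Pow Q. a R * (-1) ^ card R) else 0)"
      using Q assms(2) by (intro sum_local_padded_Zsum) auto
    finally show ?thesis using Q assms(2) by auto
  qed
  then show ?thesis by (rule that)
qed

lemma qtrace_klocal_Bop_Cop:
  assumes "klocal n k A" "k \<le> n"
  shows "qtrace n (mmult n A (Bop n k)) = (2::complex) powi (int k - int n) * qtrace n (mmult n A (Cop n k))"
proof -
  obtain c where c: "\<And>\<psi>. (\<Sum>S\<in>Pow {..<n}. A S S * padded_Zsum n k \<psi> S)
      = (\<psi> True + \<psi> False) ^ (n - k) * c"
    using sum_klocal_padded_Zsum[OF assms(1) order_refl] by auto
  have "(2::complex) powi (int k - int n) * 2 ^ (n - k) = 1"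
    using assms(2) by (simp add: power_int_diff power_int_of_nat flip: power_add)
  then show ?thesis unfolding qtrace_mmult_Bop qtrace_mmult_Cop c by (simp add: mult.assoc[symmetric])
qed

lemma qtrace_klocal_Bop_eq_0:
  assumes "klocal n k A" "k < r"
  shows "qtrace n (mmult n A (Bop n r)) = 0"
proof -
  obtain c where "\<And>\<psi>. (\<Sum>S\<in>Pow {..<n}. A S S * padded_Zsum n r \<psi> S)
      = (if r = k then (\<psi> True + \<psi> False) ^ (n - r) * c else 0)"
    using sum_klocal_padded_Zsum[OF assms(1)] assms(2) by (metis less_imp_le)
  then show ?thesis using assms(2) by (simp add: qtrace_mmult_Bop)
qed

theorem lemma2:
  fixes n k :: nat and H :: qop
  assumes "n \<ge> 1" and "k \<le> n" and "sum_of_klocal n k H"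
  shows "qtrace n (mmult n H (Bop n k)) = (2::complex) powi (int k - int n) * qtrace n (mmult n H (Cop n k))
       \<and> (\<forall>r. k < r \<and> r \<le> n \<longrightarrow> qtrace n (mmult n H (Bop n r)) = 0)"
proof -
  obtain m and Ms :: "nat \<Rightarrow> qop" where local: "\<forall>i<m. klocal n k (Ms i)"
    and H: "\<forall>S\<in>basis n. \<forall>T\<in>basis n. H S T = (\<Sum>i<m. Ms i S T)"
    using assms(3) unfolding sum_of_klocal_def by blast
  have "qtrace n (mmult n H (Bop n k)) = (\<Sum>i<m. 2 powi (int k - int n) * qtrace n (mmult n (Ms i) (Cop n k)))"
    using local assms(2) by (simp add: qtrace_mmult_sum_left[OF H] qtrace_klocal_Bop_Cop)
  also have "\<dots> = 2 powi (int k - int n) * qtrace n (mmult n H (Cop n k))"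
    by (simp add: qtrace_mmult_sum_left[OF H] sum_distrib_left)
  finally have "qtrace n (mmult n H (Bop n k))
      = 2 powi (int k - int n) * qtrace n (mmult n H (Cop n k))" .
  moreover have "qtrace n (mmult n H (Bop n r)) = 0" if "k < r" for r
    using local that by (auto simp: qtrace_mmult_sum_left[OF H] qtrace_klocal_Bop_eq_0 intro!: sum.neutral)
  ultimately show ?thesis by auto
qed

end
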